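(* Let $F:\mathcal{W}\to\mathbb{R}$ be smooth. Let $\tilde x_t\in\mathcal{W}$, set $x^j_{t,0}=\tilde x_t$ and define $x^j_{t,k}=\mathrm{R}_{x^j_{t,k-1}}\big(-\alpha_{t,k-1}\mathcal{G}_F(x^j_{t,k-1})\big)$ for $k\ge1$, where $\alpha_{t,k-1}>0$ and $\mathcal{G}_F(x^j_{t,k-1})\in\mathrm{T}_{x^j_{t,k-1}}\mathcal{M}$ is an estimator of $\mathrm{grad}F(x^j_{t,k-1})$; assume all these points lie in $\mathcal{W}$. Then for every $k\ge1$, \[ \|\mathrm{R}_{\tilde x_t}^{-1}(x^j_{t,k})\|^2\le 2k\sum_{\tau=0}^{k-1}\alpha_{t,\tau}^2\big(C_2^2+\alpha_{t,\tau}^2C_3^2\|\mathcal{G}_F(x^j_{t,\tau})\|^2\big)\|\mathcal{G}_F(x^j_{t,\tau})\|^2 . \]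
   Context: $\mathcal{M}$ is a Riemannian manifold with norm $\|\cdot\|$ on tangent spaces; $0_x$ is the zero of $\mathrm{T}_x\mathcal{M}$. $\mathrm{R}$ is a smooth retraction ($\mathrm{R}_x(0_x)=x$, $\mathrm{D}\mathrm{R}_x(0_x)=\mathrm{id}$). $\mathcal{W}\subseteq\mathcal{M}$ is a compact connected set that is totally retractive: there is $r>0$ such that for every $y\in\mathcal{W}$, $\mathcal{W}\subseteq\mathrm{R}_y(\mathbb{B}(0_y,r))$ and $\mathrm{R}_y$ is a diffeomorphism on $\mathbb{B}(0_y,r)$; so $\mathrm{R}_x^{-1}(y)$ is defined for $x,y\in\mathcal{W}$. For $x,y\in\mathcal{W}$ let $P_{x,y}=\mathrm{R}_y^{-1}\circ\mathrm{R}_x$ (a map from $\mathrm{R}_x^{-1}(\mathcal{W})\subseteq\mathrm{T}_x\mathcal{M}$ to $\mathrm{T}_y\mathcal{M}$). $C_2,C_3>0$ are constants (depending only on $\mathcal{M}$, $\mathrm{R}$, $\mathcal{W}$, obtained as uniform bounds on the first and second derivatives of $P_{x,y}$ on this compact domain) such that for all $x,y\in\mathcal{W}$ and all $\eta\in\mathrm{T}_x\mathcal{M}$ with $\mathrm{R}_x(\eta)\in\mathcal{W}$: $\|\mathrm{D}P_{x,y}(0_x)\|_{\mathrm{op}}\le C_2$ and $\|P_{x,y}(\eta)-P_{x,y}(0_x)-\mathrm{D}P_{x,y}(0_x)[\eta]\|\le C_3\|\eta\|^2$. *)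

theory Defs
  imports "HOL-Analysis.Analysis"
begin

text \<open>Points of the manifold are elements of a
  type 'p; the tangent space at x is a linear subspace T x of a common real inner
  product space 'v (isometric embedding of the tangent bundle). A retraction is a map
  R :: 'p => 'v => 'p, where R x is applied to tangent vectors in T x.\<close>

definition Rinv :: "('p \<Rightarrow> 'v::real_normed_vector \<Rightarrow> 'p) \<Rightarrow> ('p \<Rightarrow> 'v set) \<Rightarrow> real \<Rightarrow> 'p \<Rightarrow> 'p \<Rightarrow> 'v"
  where "Rinv R T r y z = (THE v. v \<in> T y \<and> norm v < r \<and> R y v = z)"

definition totally_retractive ::
  "('p \<Rightarrow> 'v::real_normed_vector \<Rightarrow> 'p) \<Rightarrow> ('p \<Rightarrow> 'v set) \<Rightarrow> 'p set \<Rightarrow> real \<Rightarrow> bool"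
  where "totally_retractive R T W r \<longleftrightarrow> r > 0 \<and>
     (\<forall>y\<in>W. W \<subseteq> R y ` (T y \<inter> ball 0 r) \<and> inj_on (R y) (T y \<inter> ball 0 r))"

end

theory Submission
  imports Defs
begin

text \<open>In the chart \<open>Rinv q\<close> one retraction step from \<open>p\<close> along \<open>\<eta>\<close> moves the
  coordinate by \<open>DP p q \<eta>\<close> plus a quadratic remainder, hence by at most
  \<open>C2 |\<eta>| + C3 |\<eta>|\<^sup>2\<close>. Telescoping from \<open>Rinv xt xt = 0\<close> bounds \<open>|Rinv xt (x k)|\<close> by
  the sum of these step sizes, and Cauchy-Schwarz together with
  \<open>(a + b)\<^sup>2 \<le> 2 (a\<^sup>2 + b\<^sup>2)\<close> turns the square of that sum into the claimed bound.\<close>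

lemma Rinv_eqI:
  assumes "inj_on (R y) (T y \<inter> ball 0 r)" and "v \<in> T y" and "norm v < r" and "R y v = z"
  shows "Rinv R T r y z = v"
  unfolding Rinv_def
proof (rule the_equality)
  show "v \<in> T y \<and> norm v < r \<and> R y v = z"
    using assms by simp
next
  fix w assume "w \<in> T y \<and> norm w < r \<and> R y w = z"
  then show "w = v"
    using assms by (auto intro: inj_onD)
qed

lemma norm_diff_le_sum_increments:
  fixes f :: "nat \<Rightarrow> 'a::real_normed_vector"
  assumes "\<And>i. i < n \<Longrightarrow> norm (f (Suc i) - f i) \<le> c i"
  shows "norm (f n - f 0) \<le> (\<Sum>i<n. c i)"
proof -
  have "norm (f n - f 0) = norm (\<Sum>i<n. f (Suc i) - f i)"
    by (simp only: sum_lessThan_telescope)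
  also have "\<dots> \<le> (\<Sum>i<n. norm (f (Suc i) - f i))"
    by (rule norm_sum)
  also have "\<dots> \<le> (\<Sum>i<n. c i)"
    using assms by (intro sum_mono) simp
  finally show ?thesis .
qed

lemma square_sum_le_twice_card_sum_squares:
  fixes a b :: "'a \<Rightarrow> real"
  shows "(\<Sum>i\<in>A. a i + b i)\<^sup>2 \<le> 2 * card A * (\<Sum>i\<in>A. (a i)\<^sup>2 + (b i)\<^sup>2)"
proof -
  have "(\<Sum>i\<in>A. a i + b i)\<^sup>2 \<le> (\<Sum>i\<in>A. (a i + b i)\<^sup>2) * card A"
    by (rule sum_squared_le_sum_of_squares)
  also have "\<dots> \<le> (\<Sum>i\<in>A. 2 * ((a i)\<^sup>2 + (b i)\<^sup>2)) * card A"
    using sum_squares_bound[of "a i" "b i" for i]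
    by (intro mult_right_mono sum_mono) (simp_all add: power2_sum algebra_simps)
  also have "\<dots> = 2 * card A * (\<Sum>i\<in>A. (a i)\<^sup>2 + (b i)\<^sup>2)"
    by (simp add: sum_distrib_left sum_distrib_right algebra_simps)
  finally show ?thesis .
qed

locale retraction_chart_bounds =
  fixes R :: "'p \<Rightarrow> 'v::real_normed_vector \<Rightarrow> 'p"
    and T :: "'p \<Rightarrow> 'v set"
    and W :: "'p set"
    and r C2 C3 :: real
    and DP :: "'p \<Rightarrow> 'p \<Rightarrow> 'v \<Rightarrow> 'v"
  assumes tangent: "\<And>p. subspace (T p)"
    and R_zero: "\<And>p. R p 0 = p"
    and W_retr: "totally_retractive R T W r"
    and DP_bound: "\<And>p q v. p \<in> W \<Longrightarrow> q \<in> W \<Longrightarrow> v \<in> T p \<Longrightarrow>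
           norm (DP p q v) \<le> C2 * norm v"
    and P_remainder: "\<And>p q \<eta>. p \<in> W \<Longrightarrow> q \<in> W \<Longrightarrow> \<eta> \<in> T p \<Longrightarrow> R p \<eta> \<in> W \<Longrightarrow>
           norm (Rinv R T r q (R p \<eta>) - Rinv R T r q (R p 0) - DP p q \<eta>) \<le> C3 * (norm \<eta>)\<^sup>2"
begin

lemma Rinv_self:
  assumes "y \<in> W"
  shows "Rinv R T r y y = 0"
  using W_retr assms tangent[of y]
  by (intro Rinv_eqI) (auto simp: totally_retractive_def R_zero subspace_0)

lemma norm_Rinv_step_le:
  assumes "p \<in> W" and "q \<in> W" and "\<eta> \<in> T p" and "R p \<eta> \<in> W"
  shows "norm (Rinv R T r q (R p \<eta>) - Rinv R T r q p) \<le> C2 * norm \<eta> + C3 * (norm \<eta>)\<^sup>2"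
proof -
  let ?d = "Rinv R T r q (R p \<eta>) - Rinv R T r q p"
  have "norm ?d \<le> norm (DP p q \<eta>) + norm (?d - DP p q \<eta>)"
    by (metis add.commute diff_add_cancel norm_triangle_ineq)
  also have "\<dots> \<le> C2 * norm \<eta> + C3 * (norm \<eta>)\<^sup>2"
    using DP_bound[OF assms(1-3)] P_remainder[OF assms] by (simp add: R_zero)
  finally show ?thesis .
qed

lemma norm_Rinv_iterate_le:
  assumes "q \<in> W" and "x 0 = q" and "\<And>i. x i \<in> W" and "\<And>i. \<eta> i \<in> T (x i)"
    and "\<And>i. x (Suc i) = R (x i) (\<eta> i)"
  shows "norm (Rinv R T r q (x n)) \<le> (\<Sum>i<n. C2 * norm (\<eta> i) + C3 * (norm (\<eta> i))\<^sup>2)"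
proof -
  have "norm (Rinv R T r q (x (Suc i)) - Rinv R T r q (x i))
          \<le> C2 * norm (\<eta> i) + C3 * (norm (\<eta> i))\<^sup>2" for i
    using norm_Rinv_step_le[of "x i" q "\<eta> i"] assms by metis
  then have "norm (Rinv R T r q (x n) - Rinv R T r q (x 0))
               \<le> (\<Sum>i<n. C2 * norm (\<eta> i) + C3 * (norm (\<eta> i))\<^sup>2)"
    by (rule norm_diff_le_sum_increments)
  then show ?thesis
    using assms(1,2) by (simp add: Rinv_self)
qed

end

theorem lemma3:
  fixes R :: "'p::topological_space \<Rightarrow> 'v::real_inner \<Rightarrow> 'p"
    and T :: "'p \<Rightarrow> 'v set"
    and W :: "'p set"
    and r C2 C3 :: real
    and DP :: "'p \<Rightarrow> 'p \<Rightarrow> 'v \<Rightarrow> 'v"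
    and xt :: 'p
    and x :: "nat \<Rightarrow> 'p"
    and \<alpha> :: "nat \<Rightarrow> real"
    and G :: "nat \<Rightarrow> 'v"
    and k :: nat
  assumes tangent: "\<And>p. subspace (T p)"
    and R_zero: "\<And>p. R p 0 = p"
    and W_compact: "compact W" and W_connected: "connected W"
    and W_retr: "totally_retractive R T W r"
    and C2_pos: "C2 > 0" and C3_pos: "C3 > 0"
    and DP_deriv: "\<And>p q. p \<in> W \<Longrightarrow> q \<in> W \<Longrightarrow>
           ((\<lambda>\<eta>. Rinv R T r q (R p \<eta>)) has_derivative DP p q) (at 0 within T p)"
    and DP_bound: "\<And>p q v. p \<in> W \<Longrightarrow> q \<in> W \<Longrightarrow> v \<in> T p \<Longrightarrow>
           norm (DP p q v) \<le> C2 * norm v"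
    and P_remainder: "\<And>p q \<eta>. p \<in> W \<Longrightarrow> q \<in> W \<Longrightarrow> \<eta> \<in> T p \<Longrightarrow> R p \<eta> \<in> W \<Longrightarrow>
           norm (Rinv R T r q (R p \<eta>) - Rinv R T r q (R p 0) - DP p q \<eta>) \<le> C3 * (norm \<eta>)\<^sup>2"
    and xt_W: "xt \<in> W"
    and x0: "x 0 = xt"
    and x_step: "\<And>i. x (Suc i) = R (x i) (- (\<alpha> i *\<^sub>R G i))"
    and \<alpha>_pos: "\<And>i. \<alpha> i > 0"
    and G_tangent: "\<And>i. G i \<in> T (x i)"
    and x_W: "\<And>i. x i \<in> W"
    and k_pos: "k \<ge> 1"
  shows "(norm (Rinv R T r xt (x k)))\<^sup>2 \<le>
    2 * real k * (\<Sum>\<tau><k. (\<alpha> \<tau>)\<^sup>2 * (C2\<^sup>2 + (\<alpha> \<tau>)\<^sup>2 * C3\<^sup>2 * (norm (G \<tau>))\<^sup>2) * (norm (G \<tau>))\<^sup>2)"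
proof -
  \<comment> \<open>Only the two bounds on \<open>DP\<close> enter.\<close>
  interpret retraction_chart_bounds R T W r C2 C3 DP
    using tangent R_zero W_retr DP_bound P_remainder by unfold_locales
  define s where "s i = \<alpha> i * norm (G i)" for i
  have step_norm: "norm (- (\<alpha> i *\<^sub>R G i)) = s i" for i
    using \<alpha>_pos[of i] by (simp add: s_def)
  have step_tangent: "- (\<alpha> i *\<^sub>R G i) \<in> T (x i)" for i
    using tangent G_tangent by (simp add: subspace_neg subspace_scale)
  have "norm (Rinv R T r xt (x k)) \<le> (\<Sum>\<tau><k. C2 * s \<tau> + C3 * (s \<tau>)\<^sup>2)"
    using norm_Rinv_iterate_le[OF xt_W x0 x_W step_tangent x_step] by (simp only: step_norm)
  then have "(norm (Rinv R T r xt (x k)))\<^sup>2 \<le> (\<Sum>\<tau><k. C2 * s \<tau> + C3 * (s \<tau>)\<^sup>2)\<^sup>2"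
    by (simp add: power_mono)
  also have "\<dots> \<le> 2 * real k * (\<Sum>\<tau><k. (C2 * s \<tau>)\<^sup>2 + (C3 * (s \<tau>)\<^sup>2)\<^sup>2)"
    using square_sum_le_twice_card_sum_squares[of "\<lambda>\<tau>. C2 * s \<tau>" "\<lambda>\<tau>. C3 * (s \<tau>)\<^sup>2" "{..<k}"]
    by simp
  also have "\<dots> = 2 * real k * (\<Sum>\<tau><k. (\<alpha> \<tau>)\<^sup>2 * (C2\<^sup>2 + (\<alpha> \<tau>)\<^sup>2 * C3\<^sup>2 * (norm (G \<tau>))\<^sup>2) * (norm (G \<tau>))\<^sup>2)"
    by (simp add: s_def power_mult_distrib algebra_simps)
  finally show ?thesis .
qed

end
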